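(* Let $n\in\mathbb{N}$, $H\in\mathbb{R}^{n\times n}$, $W\in\mathbb{R}^{n\times n}$ with $W\succ 0$, let $C=\mathrm{diag}(C_{11},\dots,C_{nn})$ be diagonal with all $C_{ii}\neq 0$, and let $V=\mathrm{diag}(\sigma_1^2,\dots,\sigma_n^2)$ with all $\sigma_i>0$. Assume $(H,C)$ is observable and $(H,D)$ is controllable, where $W=DD^T$. Let $\Sigma$ be the unique positive semidefinite solution of $$\Sigma = H\Sigma H^T - H\Sigma C^T(C\Sigma C^T+V)^{-1}C\Sigma H^T + W ,$$ and let $\overline{\Sigma}:=(C^TV^{-1}C+\Sigma^{-1})^{-1}$. Then $$\frac{n\,\sigma_u^2}{C_u^2+\sigma_u^2\,\lambda_n(W)^{-1}}\;\le\;\mathrm{tr}\,\overline{\Sigma}\;\le\; n\,\frac{\sigma_l^2}{C_l^2}.$$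
   Context: This models a linear system $x(k+1)=Hx(k)+w(k)$, $w(k)\sim\mathcal N(0,W)$, whose outputs $Cx(k)$ are privatized by adding Gaussian noise $v(k)\sim\mathcal N(0,V)$ before being processed by a steady-state Kalman filter; $\Sigma$ is the steady-state a priori error covariance and $\overline\Sigma$ the steady-state a posteriori error covariance (its trace is the steady-state mean squared estimation error). For a symmetric matrix $K$, $\lambda_n(K)\le\dots\le\lambda_1(K)$ denote its eigenvalues. Indices: $l:=\arg\min_{1\le i\le n} C_{ii}^2/\sigma_i^2$ and $u:=\arg\max_{1\le i\le n} C_{ii}^2/\sigma_i^2$; $C_l:=C_{ll}$, $C_u:=C_{uu}$, and $\sigma_l,\sigma_u$ are the corresponding $\sigma_i$. *)

theory Defs
  imports "HOL-Analysis.Analysis"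
begin

primrec matpow :: "real^'n^'n \<Rightarrow> nat \<Rightarrow> real^'n^'n" where
  "matpow A 0 = mat 1"
| "matpow A (Suc k) = A ** matpow A k"

definition diag_mat :: "('n \<Rightarrow> real) \<Rightarrow> real^'n^'n" where
  "diag_mat d = (\<chi> i j. if i = j then d i else 0)"

definition symmetric_mat :: "real^'n^'n \<Rightarrow> bool" where
  "symmetric_mat A \<longleftrightarrow> transpose A = A"

definition pos_def :: "real^'n^'n \<Rightarrow> bool" where
  "pos_def A \<longleftrightarrow> symmetric_mat A \<and> (\<forall>x. x \<noteq> 0 \<longrightarrow> x \<bullet> (A *v x) > 0)"

definition pos_semidef :: "real^'n^'n \<Rightarrow> bool" where
  "pos_semidef A \<longleftrightarrow> symmetric_mat A \<and> (\<forall>x. x \<bullet> (A *v x) \<ge> 0)"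

definition mat_eigenvalue :: "real^'n^'n \<Rightarrow> real \<Rightarrow> bool" where
  "mat_eigenvalue A \<mu> \<longleftrightarrow> (\<exists>v. v \<noteq> 0 \<and> A *v v = \<mu> *\<^sub>R v)"

definition lambda_min :: "real^'n^'n \<Rightarrow> real" where
  "lambda_min A = Min {\<mu>. mat_eigenvalue A \<mu>}"

text \<open>Observability of (H,C): the observability matrix [C; CH; ...; CH^(n-1)]
  has full column rank n, i.e. its kernel is trivial.\<close>
definition observable :: "real^'n^'n \<Rightarrow> real^'n^'p \<Rightarrow> bool" where
  "observable H C \<longleftrightarrow>
     (\<forall>x. (\<forall>k<CARD('n). C *v (matpow H k *v x) = 0) \<longrightarrow> x = 0)"

text \<open>Controllability of (H,D): the controllability matrix [D, HD, ..., H^(n-1) D]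
  has full row rank n, i.e. its columns span R^n.\<close>
definition controllable :: "real^'n^'n \<Rightarrow> real^'m^'n \<Rightarrow> bool" where
  "controllable H D \<longleftrightarrow>
     span (\<Union>k<CARD('n). range (\<lambda>u. matpow H k *v (D *v u))) = UNIV"

end

theory Submission
  imports Defs
begin

text \<open>The Riccati equation says \<open>\<Sigma> = H P H\<^sup>T + W\<close>, where \<open>P\<close> is the positive semidefinite
  a posteriori covariance of a Kalman update; hence \<open>\<Sigma> \<succeq> W \<succeq> \<lambda>\<^sub>n(W) I\<close> and
  \<open>\<Sigma>\<^sup>-\<^sup>1 \<preceq> \<lambda>\<^sub>n(W)\<^sup>-\<^sup>1 I\<close>. As \<open>C\<^sup>T V\<^sup>-\<^sup>1 C = diag(C\<^sub>i\<^sub>i\<^sup>2 / \<sigma>\<^sub>i\<^sup>2)\<close>, the information matrix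
  \<open>M = C\<^sup>T V\<^sup>-\<^sup>1 C + \<Sigma>\<^sup>-\<^sup>1\<close> (the inverse of the steady-state a posteriori covariance) lies
  between \<open>diag(C\<^sub>i\<^sub>i\<^sup>2 / \<sigma>\<^sub>i\<^sup>2)\<close> and \<open>(C\<^sub>u\<^sup>2 / \<sigma>\<^sub>u\<^sup>2 + \<lambda>\<^sub>n(W)\<^sup>-\<^sup>1) I\<close> in the Loewner order.
  Inversion reverses this order, so each diagonal entry of \<open>M\<^sup>-\<^sup>1\<close> lies between
  \<open>(C\<^sub>u\<^sup>2 / \<sigma>\<^sub>u\<^sup>2 + \<lambda>\<^sub>n(W)\<^sup>-\<^sup>1)\<^sup>-\<^sup>1\<close> and \<open>\<sigma>\<^sub>l\<^sup>2 / C\<^sub>l\<^sup>2\<close>; summing the \<open>n\<close> entries bounds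
  the trace.\<close>

lemma matrix_inv_mult:
  fixes A :: "real^'n^'n"
  assumes "invertible A"
  shows "A ** matrix_inv A = mat 1" and "matrix_inv A ** A = mat 1"
  using someI_ex[OF assms[unfolded invertible_def]] unfolding matrix_inv_def by auto

lemma inner_matrix_vector_transpose:
  "(x::real^'m) \<bullet> ((A::real^'n^'m) *v y) = (transpose A *v x) \<bullet> y"
  by (simp add: dot_lmul_matrix)

lemma symmetric_quad_commute:
  "transpose A = A \<Longrightarrow> (x::real^'n) \<bullet> ((A::real^'n^'n) *v y) = y \<bullet> (A *v x)"
  by (metis inner_matrix_vector_transpose inner_commute)

lemma quad_congruence:
  fixes A :: "real^'n^'m" and B :: "real^'n^'n"
  shows "x \<bullet> ((A ** B ** transpose A) *v x) = (transpose A *v x) \<bullet> (B *v (transpose A *v x))"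
  by (simp add: matrix_vector_mul_assoc[symmetric] inner_matrix_vector_transpose)

lemma matrix_diff_ldistrib: "(A::real^'n^'m) ** (B - C) = A ** B - A ** (C::real^'k^'n)"
  by (simp add: matrix_matrix_mult_def vec_eq_iff sum_subtractf algebra_simps)

lemma matrix_diff_rdistrib: "((B::real^'n^'m) - C) ** (A::real^'k^'n) = B ** A - C ** A"
  by (simp add: matrix_matrix_mult_def vec_eq_iff sum_subtractf algebra_simps)

lemma invertible_if_quad_pos:
  assumes "\<forall>x. x \<noteq> 0 \<longrightarrow> 0 < x \<bullet> ((A::real^'n^'n) *v x)"
  shows "invertible A"
proof -
  have "\<forall>x. A *v x = 0 \<longrightarrow> x = 0" using assms by force
  then show ?thesis using invertible_left_inverse matrix_left_invertible_ker by blast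
qed

lemma pos_def_invertible: "pos_def A \<Longrightarrow> invertible A"
  unfolding pos_def_def by (blast intro: invertible_if_quad_pos)

lemma pos_def_matrix_inv:
  fixes A :: "real^'n^'n"
  assumes "pos_def A"
  shows "pos_def (matrix_inv A)"
proof -
  have sym: "transpose A = A" and pos: "\<forall>x. x \<noteq> 0 \<longrightarrow> 0 < x \<bullet> (A *v x)"
    using assms unfolding pos_def_def symmetric_mat_def by auto
  define B where "B = matrix_inv A"
  have AB: "A ** B = mat 1" and BA: "B ** A = mat 1"
    using matrix_inv_mult pos_def_invertible[OF assms] unfolding B_def by blast+
  have "transpose B = (B ** A) ** transpose B"
    using BA by simp
  also have "\<dots> = B ** transpose (B ** A)"
    by (simp add: matrix_mul_assoc[symmetric] matrix_transpose_mul sym)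
  finally have symB: "transpose B = B"
    using BA by simp
  have "0 < y \<bullet> (B *v y)" if "y \<noteq> 0" for y
  proof -
    have "A *v (B *v y) = y"
      by (simp add: matrix_vector_mul_assoc AB)
    then have "B *v y \<noteq> 0" and "y \<bullet> (B *v y) = (B *v y) \<bullet> (A *v (B *v y))"
      using that by (auto simp: inner_commute)
    then show ?thesis using pos by simp
  qed
  then show ?thesis
    using symB unfolding pos_def_def symmetric_mat_def B_def by blast
qed

lemma pos_def_add:
  fixes A B :: "real^'n^'n"
  assumes "pos_def A" and "pos_def B"
  shows "pos_def (A + B)"
proof -
  have "transpose (A + B) = transpose A + transpose B"
    by (simp add: transpose_def vec_eq_iff)
  with assms show ?thesis
    unfolding pos_def_def symmetric_mat_def
    by (simp add: matrix_vector_mult_add_rdistrib inner_add_right add_pos_pos)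
qed

lemma matrix_inv_antimono:
  fixes N M :: "real^'n^'n"
  assumes N: "pos_def N" and le: "\<forall>x. x \<bullet> (N *v x) \<le> x \<bullet> (M *v x)"
  shows "y \<bullet> (matrix_inv M *v y) \<le> y \<bullet> (matrix_inv N *v y)"
proof -
  have sym: "transpose N = N" and Npos: "\<forall>x. x \<noteq> 0 \<longrightarrow> 0 < x \<bullet> (N *v x)"
    using N unfolding pos_def_def symmetric_mat_def by auto
  have "\<forall>x. x \<noteq> 0 \<longrightarrow> 0 < x \<bullet> (M *v x)"
    using Npos le by (meson less_le_trans)
  then have "M ** matrix_inv M = mat 1"
    using matrix_inv_mult invertible_if_quad_pos by blast
  moreover have "N ** matrix_inv N = mat 1"
    using matrix_inv_mult pos_def_invertible[OF N] by blast
  ultimately obtain x w where Mx: "M *v x = y" and Nw: "N *v w = y"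
    and x: "x = matrix_inv M *v y" and w: "w = matrix_inv N *v y"
    by (metis matrix_vector_mul_assoc matrix_vector_mul_lid)
  have "0 \<le> (x - w) \<bullet> (N *v (x - w))"
    using Npos by (cases "x = w") (auto intro: less_imp_le)
  also have "\<dots> = x \<bullet> (N *v x) - 2 * (x \<bullet> y) + w \<bullet> y"
    using symmetric_quad_commute[OF sym, of w x] Nw
    by (simp add: matrix_vector_mult_diff_distrib inner_diff_left inner_diff_right inner_commute)
  also have "x \<bullet> (N *v x) \<le> x \<bullet> y"
    using le Mx by metis
  finally show ?thesis
    using x w by (simp add: inner_commute)
qed

lemma nonneg_quadratic_linear_coeff_zero:
  fixes a b :: real
  assumes "0 \<le> a" and "\<forall>t. 0 \<le> 2 * t * b + t\<^sup>2 * a"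
  shows "b = 0"
proof (rule ccontr)
  assume "b \<noteq> 0"
  define t where "t = - b / (a + 1)"
  have ht: "(a + 1) * t = - b"
    using assms(1) by (simp add: t_def)
  have "(a + 1)\<^sup>2 * (2 * t * b + t\<^sup>2 * a) = 2 * b * (a + 1) * ((a + 1) * t) + ((a + 1) * t)\<^sup>2 * a"
    by (simp add: power2_eq_square algebra_simps)
  also have "\<dots> = - (b\<^sup>2 * (a + 2))"
    unfolding ht by (simp add: power2_eq_square algebra_simps)
  finally have "(a + 1)\<^sup>2 * (2 * t * b + t\<^sup>2 * a) = - (b\<^sup>2 * (a + 2))" .
  moreover have "0 \<le> (a + 1)\<^sup>2 * (2 * t * b + t\<^sup>2 * a)"
    using assms(2) by simp
  moreover have "0 < b\<^sup>2 * (a + 2)"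
    using \<open>b \<noteq> 0\<close> assms(1) by simp
  ultimately show False by linarith
qed

lemma psd_quad_zero_imp_kernel:
  fixes A :: "real^'n^'n"
  assumes sym: "transpose A = A" and psd: "\<forall>y. 0 \<le> y \<bullet> (A *v y)"
    and zero: "x \<bullet> (A *v x) = 0"
  shows "A *v x = 0"
proof -
  define r where "r = A *v x"
  have "(x + t *\<^sub>R r) \<bullet> (A *v (x + t *\<^sub>R r)) = 2 * t * (r \<bullet> r) + t\<^sup>2 * (r \<bullet> (A *v r))" for t
    using zero symmetric_quad_commute[OF sym, of x r]
    by (simp add: r_def matrix_vector_right_distrib matrix_vector_mult_scaleR inner_add_left
        inner_add_right power2_eq_square algebra_simps inner_commute)
  then have "r \<bullet> r = 0"
    using psd by (intro nonneg_quadratic_linear_coeff_zero[of "r \<bullet> (A *v r)"]) metis+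
  then show ?thesis by (simp add: r_def)
qed

lemma symmetric_mat_eigenvalues_finite:
  fixes A :: "real^'n^'n"
  assumes sym: "transpose A = A"
  shows "finite {\<mu>. mat_eigenvalue A \<mu>}"
proof -
  define E where "E = {\<mu>. mat_eigenvalue A \<mu>}"
  define v where "v \<mu> = (SOME v. v \<noteq> 0 \<and> A *v v = \<mu> *\<^sub>R v)" for \<mu>
  have v: "v \<mu> \<noteq> 0 \<and> A *v v \<mu> = \<mu> *\<^sub>R v \<mu>" if "\<mu> \<in> E" for \<mu>
    unfolding v_def by (rule someI_ex) (use that in \<open>simp add: E_def mat_eigenvalue_def\<close>)
  have "inj_on v E"
  proof (rule inj_onI)
    fix \<mu> \<nu> assume "\<mu> \<in> E" "\<nu> \<in> E" "v \<mu> = v \<nu>"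
    then have "\<mu> *\<^sub>R v \<mu> = \<nu> *\<^sub>R v \<mu>" "v \<mu> \<noteq> 0" using v by metis+
    then show "\<mu> = \<nu>" by simp
  qed
  moreover have "pairwise orthogonal (v ` E)"
  proof (clarsimp simp: pairwise_def)
    fix \<mu> \<nu> assume \<mu>: "\<mu> \<in> E" and \<nu>: "\<nu> \<in> E" and ne: "v \<mu> \<noteq> v \<nu>"
    have "\<mu> * (v \<mu> \<bullet> v \<nu>) = \<nu> * (v \<mu> \<bullet> v \<nu>)"
      using symmetric_quad_commute[OF sym, of "v \<nu>" "v \<mu>"] v[OF \<mu>] v[OF \<nu>]
      by (simp add: inner_commute)
    moreover have "\<mu> \<noteq> \<nu>" using ne by auto
    ultimately show "orthogonal (v \<mu>) (v \<nu>)" unfolding orthogonal_def by simp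
  qed
  ultimately show ?thesis
    unfolding E_def[symmetric] using pairwise_orthogonal_imp_finite finite_imageD by blast
qed

lemma rayleigh_quotient_attains_min:
  fixes A :: "real^'n^'n"
  obtains x0 where "x0 \<bullet> x0 = 1" and "\<forall>x. (x0 \<bullet> (A *v x0)) * (x \<bullet> x) \<le> x \<bullet> (A *v x)"
proof -
  define q where "q x = x \<bullet> (A *v x)" for x :: "real^'n"
  have "continuous_on (sphere 0 1) q"
    unfolding q_def by (intro continuous_intros linear_continuous_on) simp
  then obtain x0 where x0: "x0 \<in> sphere 0 1" and min: "\<forall>y\<in>sphere 0 1. q x0 \<le> q y"
    using continuous_attains_inf[OF compact_sphere, of 0 1 q] by auto
  have "q x0 * (x \<bullet> x) \<le> q x" for x
  proof (cases "x = 0")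
    case False
    define y where "y = (1 / norm x) *\<^sub>R x"
    have "q x0 \<le> q y" using min False by (simp add: y_def)
    then have "q x0 * (x \<bullet> x) \<le> q y * (x \<bullet> x)"
      by (simp add: mult_right_mono)
    moreover have "q x = (norm x)\<^sup>2 * q y"
      using False by (simp add: y_def q_def matrix_vector_mult_scaleR power2_eq_square)
    ultimately show ?thesis
      by (simp add: power2_norm_eq_inner mult.commute)
  qed (simp add: q_def)
  moreover have "x0 \<bullet> x0 = 1"
    using x0 by (simp add: power2_norm_eq_inner[symmetric])
  ultimately show ?thesis using that unfolding q_def by blast
qed

text \<open>The minimiser of the Rayleigh quotient is an eigenvector, because \<open>W - \<mu>\<^sub>0 I\<close> is
  positive semidefinite and vanishes on it as a quadratic form.\<close>
lemma lambda_min_pos_def: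
  fixes W :: "real^'n^'n"
  assumes "pos_def W"
  shows "0 < lambda_min W" and "\<forall>x. lambda_min W * (x \<bullet> x) \<le> x \<bullet> (W *v x)"
proof -
  have sym: "transpose W = W" and pos: "\<forall>x. x \<noteq> 0 \<longrightarrow> 0 < x \<bullet> (W *v x)"
    using assms unfolding pos_def_def symmetric_mat_def by auto
  obtain x0 where x0: "x0 \<bullet> x0 = 1"
    and bound: "\<forall>x. (x0 \<bullet> (W *v x0)) * (x \<bullet> x) \<le> x \<bullet> (W *v x)"
    using rayleigh_quotient_attains_min .
  define \<mu>0 where "\<mu>0 = x0 \<bullet> (W *v x0)"
  define B where "B = W - \<mu>0 *\<^sub>R mat 1"
  have Bx: "B *v x = W *v x - \<mu>0 *\<^sub>R x" for x
    by (simp add: B_def matrix_vector_mult_diff_rdistrib scaleR_matrix_vector_assoc[symmetric])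
  have "B *v x0 = 0"
  proof (rule psd_quad_zero_imp_kernel)
    show "transpose B = B"
      using sym by (simp add: B_def transpose_def vec_eq_iff mat_def)
    show "\<forall>y. 0 \<le> y \<bullet> (B *v y)"
      using bound by (simp add: Bx inner_diff_right \<mu>0_def)
    show "x0 \<bullet> (B *v x0) = 0"
      using x0 by (simp add: Bx inner_diff_right \<mu>0_def)
  qed
  have "mat_eigenvalue W \<mu>0"
  proof -
    have "W *v x0 = \<mu>0 *\<^sub>R x0" and "x0 \<noteq> 0"
      using \<open>B *v x0 = 0\<close> x0 by (auto simp: Bx)
    then show ?thesis unfolding mat_eigenvalue_def by blast
  qed
  moreover have "\<mu>0 \<le> \<mu>" if "mat_eigenvalue W \<mu>" for \<mu>
  proof -
    from that obtain v where "v \<noteq> 0" and "W *v v = \<mu> *\<^sub>R v"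
      unfolding mat_eigenvalue_def by (elim exE conjE)
    moreover have "\<mu>0 * (v \<bullet> v) \<le> v \<bullet> (W *v v)"
      using bound[rule_format, of v] unfolding \<mu>0_def .
    ultimately have "\<mu>0 * (v \<bullet> v) \<le> \<mu> * (v \<bullet> v)" and "0 < v \<bullet> v"
      by simp_all
    then show ?thesis
      using mult_right_le_imp_le by blast
  qed
  ultimately have min: "lambda_min W = \<mu>0"
    unfolding lambda_min_def using symmetric_mat_eigenvalues_finite[OF sym] by (intro Min_eqI) simp_all
  have "x0 \<noteq> 0"
    using x0 by auto
  then show "0 < lambda_min W"
    using pos unfolding min \<mu>0_def by blast
  show "\<forall>x. lambda_min W * (x \<bullet> x) \<le> x \<bullet> (W *v x)"
    using bound unfolding min \<mu>0_def .
qed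

lemma diag_mat_mult_vector: "diag_mat d *v x = (\<chi> i. d i * x $ i)"
  unfolding diag_mat_def matrix_vector_mult_def vec_eq_iff
  by (simp add: if_distrib[where f="\<lambda>z. z * b" for b] cong: if_cong)

lemma diag_mat_mult: "diag_mat d ** diag_mat e = diag_mat (\<lambda>i. d i * e i)"
  unfolding diag_mat_def matrix_matrix_mult_def vec_eq_iff
  by (simp add: if_distrib[where f="\<lambda>z. z * b" for b] if_distrib[where f="\<lambda>z. b * z" for b]
      cong: if_cong)

lemma transpose_diag_mat: "transpose (diag_mat d) = diag_mat d"
  by (simp add: diag_mat_def transpose_def vec_eq_iff)

lemma mat_eq_diag_mat: "mat k = diag_mat (\<lambda>_. k)"
  by (simp add: diag_mat_def mat_def)

lemma quad_diag_mat: "x \<bullet> (diag_mat d *v x) = (\<Sum>i\<in>UNIV. d i * (x $ i)\<^sup>2)"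
  by (simp add: diag_mat_mult_vector inner_vec_def power2_eq_square algebra_simps)

lemma quad_diag_mat_const: "x \<bullet> (diag_mat (\<lambda>_. k) *v x) = k * (x \<bullet> x)"
  unfolding quad_diag_mat by (simp add: inner_vec_def power2_eq_square sum_distrib_left)

lemma quad_diag_mat_axis: "axis i 1 \<bullet> (diag_mat d *v axis i 1) = d i"
  by (simp add: diag_mat_mult_vector inner_axis')

lemma matrix_inv_diag_mat:
  assumes "\<forall>i. d i \<noteq> 0"
  shows "matrix_inv (diag_mat d) = diag_mat (\<lambda>i. inverse (d i))"
proof -
  let ?B = "diag_mat (\<lambda>i. inverse (d i))"
  have DB: "diag_mat d ** ?B = mat 1" and BD: "?B ** diag_mat d = mat 1"
    using assms by (simp_all add: diag_mat_mult mat_eq_diag_mat)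
  then have "invertible (diag_mat d)"
    unfolding invertible_def by blast
  then have "matrix_inv (diag_mat d) ** (diag_mat d ** ?B) = ?B"
    by (simp add: matrix_mul_assoc matrix_inv_mult)
  then show ?thesis
    using DB by simp
qed

lemma pos_def_diag_mat: "(\<forall>i. 0 < d i) \<Longrightarrow> pos_def (diag_mat d)"
proof -
  assume d: "\<forall>i. 0 < d i"
  have "0 < x \<bullet> (diag_mat d *v x)" if x: "x \<noteq> 0" for x
  proof -
    obtain i where "x $ i \<noteq> 0"
      using x by (metis vec_eq_iff zero_index)
    then show ?thesis
      unfolding quad_diag_mat using d by (intro sum_pos2[where i=i]) (auto simp: less_imp_le)
  qed
  then show ?thesis
    unfolding pos_def_def symmetric_mat_def by (simp add: transpose_diag_mat)
qed

lemma trace_eq_sum_quad_axis: "trace (A::real^'n^'n) = (\<Sum>i\<in>UNIV. axis i 1 \<bullet> (A *v axis i 1))"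
  unfolding trace_def inner_axis'
  by (simp add: matrix_vector_mult_def axis_def if_distrib[where f="\<lambda>z. b * z" for b] cong: if_cong)

text \<open>The matrix below is the a posteriori error covariance of a Kalman update with prior
  covariance \<open>\<Sigma>\<close>; its positivity follows by completing the square with
  \<open>z = (C\<Sigma>C\<^sup>T + V)\<^sup>-\<^sup>1 C\<Sigma>x\<close>.\<close>
lemma kalman_posterior_psd:
  fixes \<Sigma> :: "real^'n^'n" and C :: "real^'n^'p" and V :: "real^'p^'p"
  assumes \<Sigma>: "pos_semidef \<Sigma>" and V: "pos_def V"
  shows "0 \<le> x \<bullet> ((\<Sigma> - \<Sigma> ** transpose C ** matrix_inv (C ** \<Sigma> ** transpose C + V) ** C ** \<Sigma>) *v x)"
proof -
  have sym: "transpose \<Sigma> = \<Sigma>" and psd: "\<forall>x. 0 \<le> x \<bullet> (\<Sigma> *v x)"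
    using \<Sigma> unfolding pos_semidef_def symmetric_mat_def by auto
  have Vpos: "\<forall>z. z \<noteq> 0 \<longrightarrow> 0 < z \<bullet> (V *v z)"
    using V unfolding pos_def_def by blast
  then have Vpsd: "0 \<le> z \<bullet> (V *v z)" for z
    by (cases "z = 0") (auto intro: less_imp_le)
  define S where "S = C ** \<Sigma> ** transpose C + V"
  have Squad: "z \<bullet> (S *v z) = (transpose C *v z) \<bullet> (\<Sigma> *v (transpose C *v z)) + z \<bullet> (V *v z)" for z
    unfolding S_def by (simp add: matrix_vector_mult_add_rdistrib inner_add_right quad_congruence)
  have "\<forall>z. z \<noteq> 0 \<longrightarrow> 0 < z \<bullet> (S *v z)"
    using Squad psd Vpos by (metis add_nonneg_pos)
  then have "S ** matrix_inv S = mat 1"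
    using invertible_if_quad_pos matrix_inv_mult by blast
  define y where "y = C *v (\<Sigma> *v x)"
  define z where "z = matrix_inv S *v y"
  have Sz: "S *v z = y"
    unfolding z_def by (simp add: matrix_vector_mul_assoc \<open>S ** matrix_inv S = mat 1\<close>)
  have cross: "x \<bullet> (\<Sigma> *v (transpose C *v z)) = y \<bullet> z"
    using inner_matrix_vector_transpose[of x \<Sigma>] inner_matrix_vector_transpose[of "\<Sigma> *v x" "transpose C" z] sym
    by (simp add: y_def inner_commute del: transpose_matrix_vector)
  have cross': "(transpose C *v z) \<bullet> (\<Sigma> *v x) = y \<bullet> z"
    using inner_matrix_vector_transpose[of "\<Sigma> *v x" "transpose C" z]
    by (simp add: y_def inner_commute del: transpose_matrix_vector)
  let ?w = "x - transpose C *v z"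
  have "0 \<le> ?w \<bullet> (\<Sigma> *v ?w) + z \<bullet> (V *v z)"
    using psd Vpsd by (simp add: add_nonneg_nonneg)
  also have "\<dots> = x \<bullet> (\<Sigma> *v x) - 2 * (y \<bullet> z) + z \<bullet> (S *v z)"
    using Squad[of z] cross cross'
    by (simp add: matrix_vector_mult_diff_distrib inner_diff_left inner_diff_right
        del: transpose_matrix_vector)
  also have "\<dots> = x \<bullet> (\<Sigma> *v x) - y \<bullet> z"
    using Sz by (simp add: inner_commute)
  also have "\<dots> = x \<bullet> ((\<Sigma> - \<Sigma> ** transpose C ** matrix_inv S ** C ** \<Sigma>) *v x)"
    using cross by (simp add: z_def y_def matrix_vector_mult_diff_rdistrib inner_diff_right
        matrix_vector_mul_assoc matrix_mul_assoc del: transpose_matrix_vector)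
  finally show ?thesis
    unfolding S_def .
qed

lemma riccati_solution_ge:
  fixes H \<Sigma> W :: "real^'n^'n" and C :: "real^'n^'p" and V :: "real^'p^'p"
  assumes "pos_semidef \<Sigma>" and "pos_def V"
    and riccati: "\<Sigma> = H ** \<Sigma> ** transpose H
                   - H ** \<Sigma> ** transpose C ** matrix_inv (C ** \<Sigma> ** transpose C + V) ** C ** \<Sigma> ** transpose H
                   + W"
  shows "x \<bullet> (W *v x) \<le> x \<bullet> (\<Sigma> *v x)"
proof -
  define P where "P = \<Sigma> - \<Sigma> ** transpose C ** matrix_inv (C ** \<Sigma> ** transpose C + V) ** C ** \<Sigma>"
  have "H ** P ** transpose H = H ** \<Sigma> ** transpose H
          - H ** \<Sigma> ** transpose C ** matrix_inv (C ** \<Sigma> ** transpose C + V) ** C ** \<Sigma> ** transpose H"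
    unfolding P_def by (simp add: matrix_mul_assoc matrix_diff_ldistrib matrix_diff_rdistrib)
  then have "\<Sigma> = H ** P ** transpose H + W"
    using riccati by simp
  then have "x \<bullet> (\<Sigma> *v x) = (transpose H *v x) \<bullet> (P *v (transpose H *v x)) + x \<bullet> (W *v x)"
    by (metis matrix_vector_mult_add_rdistrib inner_add_right quad_congruence)
  moreover have "0 \<le> (transpose H *v x) \<bullet> (P *v (transpose H *v x))"
    unfolding P_def by (rule kalman_posterior_psd) fact+
  ultimately show ?thesis
    by simp
qed

lemma matrix_inv_quad_le:
  fixes A :: "real^'n^'n"
  assumes "0 < b" and "\<forall>x. b * (x \<bullet> x) \<le> x \<bullet> (A *v x)"
  shows "y \<bullet> (matrix_inv A *v y) \<le> (y \<bullet> y) / b"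
proof -
  have "y \<bullet> (matrix_inv A *v y) \<le> y \<bullet> (matrix_inv (diag_mat (\<lambda>_. b)) *v y)"
    using assms by (intro matrix_inv_antimono pos_def_diag_mat) (simp_all add: quad_diag_mat_const)
  also have "\<dots> = (y \<bullet> y) / b"
    using assms(1) by (simp add: matrix_inv_diag_mat quad_diag_mat_const field_simps)
  finally show ?thesis .
qed

lemma matrix_inv_quad_ge:
  fixes A :: "real^'n^'n"
  assumes "pos_def A" and "0 < k" and "\<forall>x. x \<bullet> (A *v x) \<le> k * (x \<bullet> x)"
  shows "(y \<bullet> y) / k \<le> y \<bullet> (matrix_inv A *v y)"
proof -
  have "(y \<bullet> y) / k = y \<bullet> (matrix_inv (diag_mat (\<lambda>_. k)) *v y)"
    using assms(2) by (simp add: matrix_inv_diag_mat quad_diag_mat_const field_simps)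
  also have "\<dots> \<le> y \<bullet> (matrix_inv A *v y)"
    using assms by (intro matrix_inv_antimono) (simp_all add: quad_diag_mat_const)
  finally show ?thesis .
qed

lemma trace_matrix_inv_diag_add_bounds:
  fixes T :: "real^'n^'n" and a :: "'n \<Rightarrow> real"
  assumes a_pos: "\<forall>i. 0 < a i" and T: "pos_def T"
    and "0 \<le> b" and T_le: "\<forall>x. x \<bullet> (T *v x) \<le> b * (x \<bullet> x)"
    and l: "\<forall>i. a l \<le> a i" and u: "\<forall>i. a i \<le> a u"
  shows "real CARD('n) / (a u + b) \<le> trace (matrix_inv (diag_mat a + T))"
    and "trace (matrix_inv (diag_mat a + T)) \<le> real CARD('n) / a l"
proof -
  define M where "M = diag_mat a + T"
  have Mquad: "x \<bullet> (M *v x) = x \<bullet> (diag_mat a *v x) + x \<bullet> (T *v x)" for x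
    unfolding M_def by (simp add: matrix_vector_mult_add_rdistrib inner_add_right)
  have "\<forall>x. 0 \<le> x \<bullet> (T *v x)"
    using T unfolding pos_def_def by (metis inner_zero_left less_eq_real_def)
  then have diag_le_M: "\<forall>x. x \<bullet> (diag_mat a *v x) \<le> x \<bullet> (M *v x)"
    using Mquad by simp
  have M_le: "\<forall>x. x \<bullet> (M *v x) \<le> (a u + b) * (x \<bullet> x)"
  proof
    fix x :: "real^'n"
    have "x \<bullet> (diag_mat a *v x) \<le> x \<bullet> (diag_mat (\<lambda>_. a u) *v x)"
      unfolding quad_diag_mat using u by (intro sum_mono mult_right_mono) simp_all
    then show "x \<bullet> (M *v x) \<le> (a u + b) * (x \<bullet> x)"
      using Mquad[of x] T_le[rule_format, of x] by (simp add: quad_diag_mat_const algebra_simps)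
  qed
  have "0 < a u + b"
    using a_pos \<open>0 \<le> b\<close> by (simp add: add_pos_nonneg)
  have "1 / (a u + b) \<le> axis i 1 \<bullet> (matrix_inv M *v axis i 1)" for i
    using matrix_inv_quad_ge[OF _ \<open>0 < a u + b\<close> M_le, of "axis i 1"]
      pos_def_add[OF pos_def_diag_mat[OF a_pos] T]
    by (simp add: M_def inner_axis_axis)
  then have "(\<Sum>i\<in>(UNIV::'n set). 1 / (a u + b)) \<le> trace (matrix_inv M)"
    unfolding trace_eq_sum_quad_axis by (intro sum_mono)
  then show "real CARD('n) / (a u + b) \<le> trace (matrix_inv (diag_mat a + T))"
    by (simp add: M_def)
  have "axis i 1 \<bullet> (matrix_inv M *v axis i 1) \<le> 1 / a l" for i
  proof -
    have "axis i 1 \<bullet> (matrix_inv M *v axis i 1) \<le> axis i 1 \<bullet> (matrix_inv (diag_mat a) *v axis i 1)"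
      using a_pos diag_le_M by (intro matrix_inv_antimono pos_def_diag_mat)
    also have "\<dots> = 1 / a i"
      using a_pos by (simp add: matrix_inv_diag_mat quad_diag_mat_axis less_imp_neq[symmetric] divide_inverse)
    also have "\<dots> \<le> 1 / a l"
      using a_pos l by (simp add: frac_le)
    finally show ?thesis .
  qed
  then have "trace (matrix_inv M) \<le> (\<Sum>i\<in>(UNIV::'n set). 1 / a l)"
    unfolding trace_eq_sum_quad_axis by (intro sum_mono)
  then show "trace (matrix_inv (diag_mat a + T)) \<le> real CARD('n) / a l"
    by (simp add: M_def)
qed

text \<open>Observability, controllability and \<open>W = D D\<^sup>T\<close> only guarantee that the solution \<open>\<Sigma>\<close>
  exists and is unique; the bounds need nothing beyond the Riccati equation itself.\<close>
theorem theorem2: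
  fixes H W \<Sigma> :: "real^'n^'n"
    and D :: "real^'m^'n"
    and c \<sigma> :: "'n \<Rightarrow> real"
    and l u :: 'n
  defines "C \<equiv> diag_mat c"
    and "V \<equiv> diag_mat (\<lambda>i. (\<sigma> i)\<^sup>2)"
  assumes W_pd: "pos_def W"
    and c_nz: "\<forall>i. c i \<noteq> 0"
    and \<sigma>_pos: "\<forall>i. \<sigma> i > 0"
    and W_fact: "W = D ** transpose D"
    and obs: "observable H C"
    and ctrb: "controllable H D"
    and \<Sigma>_psd: "pos_semidef \<Sigma>"
    and dare: "\<Sigma> = H ** \<Sigma> ** transpose H
                   - H ** \<Sigma> ** transpose C ** matrix_inv (C ** \<Sigma> ** transpose C + V) ** C ** \<Sigma> ** transpose H
                   + W"
    and l_min: "\<forall>i. (c l)\<^sup>2 / (\<sigma> l)\<^sup>2 \<le> (c i)\<^sup>2 / (\<sigma> i)\<^sup>2"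
    and u_max: "\<forall>i. (c i)\<^sup>2 / (\<sigma> i)\<^sup>2 \<le> (c u)\<^sup>2 / (\<sigma> u)\<^sup>2"
  shows "real CARD('n) * (\<sigma> u)\<^sup>2 / ((c u)\<^sup>2 + (\<sigma> u)\<^sup>2 * inverse (lambda_min W))
           \<le> trace (matrix_inv (transpose C ** matrix_inv V ** C + matrix_inv \<Sigma>))
       \<and> trace (matrix_inv (transpose C ** matrix_inv V ** C + matrix_inv \<Sigma>))
           \<le> real CARD('n) * ((\<sigma> l)\<^sup>2 / (c l)\<^sup>2)"
proof -
  have \<sigma>_nz: "\<forall>i. \<sigma> i \<noteq> 0"
    using \<sigma>_pos by (metis less_irrefl)
  have V_pd: "pos_def V"
    unfolding V_def using \<sigma>_nz by (intro pos_def_diag_mat) simp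
  define lam where "lam = lambda_min W"
  have lam_pos: "0 < lam" and lam_le_\<Sigma>: "\<forall>x. lam * (x \<bullet> x) \<le> x \<bullet> (\<Sigma> *v x)"
    using lambda_min_pos_def[OF W_pd] riccati_solution_ge[OF \<Sigma>_psd V_pd dare]
    unfolding lam_def by (blast intro: order_trans)+
  have "pos_def \<Sigma>"
    using \<Sigma>_psd lam_pos lam_le_\<Sigma> unfolding pos_def_def pos_semidef_def
    by (metis inner_gt_zero_iff less_le_trans mult_pos_pos)
  have \<Sigma>_inv_le: "\<forall>x. x \<bullet> (matrix_inv \<Sigma> *v x) \<le> inverse lam * (x \<bullet> x)"
    using matrix_inv_quad_le[OF lam_pos lam_le_\<Sigma>] by (simp add: divide_inverse mult.commute)
  define a where "a i = (c i)\<^sup>2 / (\<sigma> i)\<^sup>2" for i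
  have a_pos: "\<forall>i. 0 < a i"
    using c_nz \<sigma>_nz by (simp add: a_def)
  have "transpose C ** matrix_inv V ** C = diag_mat a"
    using \<sigma>_nz unfolding C_def V_def
    by (simp add: transpose_diag_mat matrix_inv_diag_mat diag_mat_mult a_def[abs_def] power2_eq_square field_simps)
  moreover have "real CARD('n) * (\<sigma> u)\<^sup>2 / ((c u)\<^sup>2 + (\<sigma> u)\<^sup>2 * inverse lam) = real CARD('n) / (a u + inverse lam)"
    using \<sigma>_nz by (simp add: a_def field_simps)
  moreover have "real CARD('n) * ((\<sigma> l)\<^sup>2 / (c l)\<^sup>2) = real CARD('n) / a l"
    by (simp add: a_def)
  moreover have "\<forall>i. a l \<le> a i" and "\<forall>i. a i \<le> a u"
    using l_min u_max by (simp_all add: a_def)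
  ultimately show ?thesis
    using trace_matrix_inv_diag_add_bounds[OF a_pos pos_def_matrix_inv[OF \<open>pos_def \<Sigma>\<close>] _ \<Sigma>_inv_le, of l u]
      lam_pos unfolding lam_def by simp
qed

end
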